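(* If a function $f$ is computable by an $M$-memory $(T(n),IO(n))$-time TM-TLM-BT with block size $B$, then there is an $M$-memory $(T(n)+B\cdot IO(n),\,B\cdot IO(n))$-time TM-TLM that computes $f$.
   Context: A Turing machine with two-level memory (TM-TLM) with main memory size $M$ has three tapes: a main memory tape of $M$ cells, an unbounded external memory tape, and an address tape for the external memory. It has a finite state set, alphabets $\Sigma\subseteq\Gamma$ with a blank, an accepting state, and a transition function $\delta: Q\times\Gamma\to Q\times\Gamma\times\{L,S,R\}$ acting on the main memory tape. There are special read and write states: on entering a read state the machine writes an address $addr$ on the address tape and the main memory cell under the head receives the content of external cell $addr$; on entering a write state, external cell $addr$ receives the content of the main memory cell under the head. Each Read/Write is one IO operation of unit cost, after which the head may move L, R or stay. Time = number of transitions other than Read/Write; IO time = number of Read/Write operations. An $M$-memory $(T(n),IO(n))$-time machine has main memory size $M$, time complexity $O(T(n))$ and IO complexity $O(IO(n))$. A TM-TLM-BT (TM-TLM with block transfer) with block size $B$ is defined like a TM-TLM except that $B$ divides $M$, both the main memory and the external memory are partitioned into aligned blocks of $B$ consecutive cells, and each IO operation transfers an entire block: even when a single cell is requested, all $B$ cells of the block containing it are transferred (between the main memory block and the external block), and this counts as one IO operation. *)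

theory Defs
  imports Complex_Main
begin

(* States and tape symbols are natural numbers; the finite state set Q and the finite
   tape alphabet Gamma are explicit finite sets. *)

datatype dir = L | S | R

(* operations on the address tape; the address tape holds a natural number address *)
datatype addrop = AKeep | AInc | ADec

record tlm =
  states :: "nat set"
  gam    :: "nat set"
  q0     :: nat
  qacc   :: nat
  rdst   :: "nat set"
  wrst   :: "nat set"
  delta  :: "nat \<Rightarrow> nat \<Rightarrow> nat \<times> nat \<times> dir"
  aop    :: "nat \<Rightarrow> nat \<Rightarrow> addrop"
  ionext :: "nat \<Rightarrow> nat \<times> dir"   (* successor state and head move after a Read/Write *)

record cfg =
  st  :: nat
  mem :: "nat \<Rightarrow> nat"      (* main memory tape, cells 0..M-1 *)
  hd  :: nat
  ext :: "nat \<Rightarrow> nat"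
  adr :: nat

definition blank :: nat where "blank = 0"

definition well_formed :: "nat set \<Rightarrow> tlm \<Rightarrow> bool" where
  "well_formed \<Sigma> m \<longleftrightarrow>
     finite (states m) \<and> finite (gam m) \<and> blank \<in> gam m \<and> \<Sigma> \<subseteq> gam m - {blank} \<and>
     q0 m \<in> states m \<and> qacc m \<in> states m \<and>
     rdst m \<subseteq> states m \<and> wrst m \<subseteq> states m \<and> rdst m \<inter> wrst m = {} \<and>
     qacc m \<notin> rdst m \<union> wrst m \<and>
     (\<forall>q\<in>states m. \<forall>g\<in>gam m. fst (delta m q g) \<in> states m \<and> fst (snd (delta m q g)) \<in> gam m) \<and>
     (\<forall>q\<in>states m. fst (ionext m q) \<in> states m)"

definition move :: "nat \<Rightarrow> dir \<Rightarrow> nat \<Rightarrow> nat" where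
  "move M d h = (case d of L \<Rightarrow> h - 1 | S \<Rightarrow> h | R \<Rightarrow> min (h + 1) (M - 1))"

definition applyop :: "addrop \<Rightarrow> nat \<Rightarrow> nat" where
  "applyop ao a = (case ao of AKeep \<Rightarrow> a | AInc \<Rightarrow> a + 1 | ADec \<Rightarrow> a - 1)"

(* An IO operation transfers the whole aligned block of B cells containing the requested
   cell; with B = 1 this is exactly the single-cell transfer of a plain TM-TLM. *)
definition step :: "nat \<Rightarrow> nat \<Rightarrow> tlm \<Rightarrow> cfg \<Rightarrow> cfg" where
  "step M B m c =
    (if st c = qacc m then c
     else if st c \<in> rdst m then
       (let (q', d) = ionext m (st c); k = hd c div B; e = adr c div B in
        c\<lparr> st := q',
           mem := (\<lambda>j. if k * B \<le> j \<and> j < k * B + B then ext c (e * B + (j - k * B)) else mem c j),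
           hd := move M d (hd c) \<rparr>)
     else if st c \<in> wrst m then
       (let (q', d) = ionext m (st c); k = hd c div B; e = adr c div B in
        c\<lparr> st := q',
           ext := (\<lambda>j. if e * B \<le> j \<and> j < e * B + B then mem c (k * B + (j - e * B)) else ext c j),
           hd := move M d (hd c) \<rparr>)
     else
       (let (q', g, d) = delta m (st c) (mem c (hd c)) in
        c\<lparr> st := q', mem := (mem c)(hd c := g), hd := move M d (hd c),
           adr := applyop (aop m (st c) (mem c (hd c))) (adr c) \<rparr>))"

definition init :: "tlm \<Rightarrow> nat list \<Rightarrow> cfg" where
  "init m x = \<lparr> st = q0 m, mem = (\<lambda>_. blank), hd = 0,
               ext = (\<lambda>i. if i < length x then x ! i else blank), adr = 0 \<rparr>"

definition run :: "nat \<Rightarrow> nat \<Rightarrow> tlm \<Rightarrow> nat list \<Rightarrow> nat \<Rightarrow> cfg" where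
  "run M B m x t = (step M B m ^^ t) (init m x)"

definition is_io :: "tlm \<Rightarrow> cfg \<Rightarrow> bool" where
  "is_io m c \<longleftrightarrow> st c \<in> rdst m \<union> wrst m"

definition halts_at :: "nat \<Rightarrow> nat \<Rightarrow> tlm \<Rightarrow> nat list \<Rightarrow> nat \<Rightarrow> bool" where
  "halts_at M B m x t \<longleftrightarrow> st (run M B m x t) = qacc m \<and> (\<forall>i<t. st (run M B m x i) \<noteq> qacc m)"

definition time_of :: "nat \<Rightarrow> nat \<Rightarrow> tlm \<Rightarrow> nat list \<Rightarrow> nat \<Rightarrow> nat" where
  "time_of M B m x t = card {i. i < t \<and> \<not> is_io m (run M B m x i)}"

definition io_of :: "nat \<Rightarrow> nat \<Rightarrow> tlm \<Rightarrow> nat list \<Rightarrow> nat \<Rightarrow> nat" where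
  "io_of M B m x t = card {i. i < t \<and> is_io m (run M B m x i)}"

definition output_is :: "cfg \<Rightarrow> nat list \<Rightarrow> bool" where
  "output_is c y \<longleftrightarrow> (\<forall>i<length y. ext c i = y ! i) \<and> ext c (length y) = blank"

definition computes_in :: "nat set \<Rightarrow> nat \<Rightarrow> nat \<Rightarrow> tlm \<Rightarrow> (nat list \<Rightarrow> nat list)
     \<Rightarrow> (nat \<Rightarrow> real) \<Rightarrow> (nat \<Rightarrow> real) \<Rightarrow> bool" where
  "computes_in \<Sigma> M B m f T IO \<longleftrightarrow>
     0 < B \<and> B dvd M \<and> 0 < M \<and> well_formed \<Sigma> m \<and>
     (\<exists>c N. \<forall>x\<in>lists \<Sigma>. \<exists>t. halts_at M B m x t \<and> output_is (run M B m x t) (f x) \<and>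
        (length x \<ge> N \<longrightarrow> real (time_of M B m x t) \<le> c * T (length x)
                        \<and> real (io_of M B m x t) \<le> c * IO (length x)))"

definition tlm_bt_computes :: "nat set \<Rightarrow> nat \<Rightarrow> nat \<Rightarrow> tlm \<Rightarrow> (nat list \<Rightarrow> nat list)
     \<Rightarrow> (nat \<Rightarrow> real) \<Rightarrow> (nat \<Rightarrow> real) \<Rightarrow> bool" where
  "tlm_bt_computes \<Sigma> M B m f T IO \<longleftrightarrow> computes_in \<Sigma> M B m f T IO"

(* M-memory (T,IO)-time TM-TLM computing f: single-cell IO, i.e. block size 1 *)
definition tlm_computes :: "nat set \<Rightarrow> nat \<Rightarrow> tlm \<Rightarrow> (nat list \<Rightarrow> nat list)
     \<Rightarrow> (nat \<Rightarrow> real) \<Rightarrow> (nat \<Rightarrow> real) \<Rightarrow> bool" where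
  "tlm_computes \<Sigma> M m f T IO \<longleftrightarrow> computes_in \<Sigma> M 1 m f T IO"

end

theory Submission
  imports Defs "HOL-Library.Countable_Set"
begin

text \<open>The block machine has only finitely many local configurations (state, main memory, head),
  so a single-cell machine can carry the current one in its finite control, replay every plain
  step in one step, and mirror the unbounded address on its own address tape.  A block IO is
  replayed cell by cell, which costs \<open>O(B)\<close> steps and single-cell IOs once the offset of the
  address inside its block is known.  That offset is read off a bounded shadow of the address kept
  in the control: exact while the address is small, and otherwise only correct modulo \<open>B\<close>.  Since
  a halting run makes at most as many consecutive plain steps as there are local configurations,
  the shadow cannot drift far between two IOs, and after each IO it is recomputed by probing
  whether the address lies below a threshold that is a multiple of \<open>B\<close>.  So each IO costs
  \<open>O(B)\<close> steps and IOs (with a constant depending on the machine) and each plain step costs one.\<close>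

lemma move_less: "h < M \<Longrightarrow> 0 < M \<Longrightarrow> move M d h < M"
  by (cases d) (auto simp: move_def)

lemma move_S [simp]: "move M S h = h"
  by (simp add: move_def)

lemma applyop_ADec_funpow [simp]: "(applyop ADec ^^ n) a = a - n"
  by (induction n) (simp_all add: applyop_def)

lemma applyop_AInc_funpow [simp]: "(applyop AInc ^^ n) a = a + n"
  by (induction n) (simp_all add: applyop_def)

lemma block_end_le:
  fixes h M B :: nat
  assumes "h < M" "B dvd M" "0 < B"
  shows "h div B * B + B \<le> M"
proof -
  obtain k where M: "M = B * k" using assms(2) by auto
  have "h div B < k" using assms(1,3) M less_mult_imp_div_less[of h k B] by (simp add: mult.commute)
  then have "h div B * B + B \<le> k * B" by (metis Suc_leI add.commute mult_Suc mult_le_mono1)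
  then show ?thesis using M by (simp add: mult.commute)
qed

lemma mod_diff1_cong:
  fixes a y B :: nat
  assumes "a mod B = y mod B" "0 < a" "0 < y"
  shows "(a - 1) mod B = (y - 1) mod B"
proof (cases "y \<le> a")
  case True
  then have "B dvd (a - 1) - (y - 1)" using assms mod_eq_dvd_iff_nat[of y a B] by simp
  then show ?thesis using True assms mod_eq_dvd_iff_nat[of "y - 1" "a - 1" B] by simp
next
  case False
  then have "B dvd (y - 1) - (a - 1)" using assms mod_eq_dvd_iff_nat[of a y B] by simp
  then show ?thesis using False assms mod_eq_dvd_iff_nat[of "a - 1" "y - 1" B] by simp
qed

lemma step_accepting: "st c = qacc m \<Longrightarrow> step M B m c = c"
  by (simp add: step_def)

lemma step_plain:
  assumes "st c \<noteq> qacc m" "st c \<notin> rdst m" "st c \<notin> wrst m"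
  shows "step M B m c = c\<lparr> st := fst (delta m (st c) (mem c (hd c))),
      mem := (mem c)(hd c := fst (snd (delta m (st c) (mem c (hd c))))),
      hd := move M (snd (snd (delta m (st c) (mem c (hd c))))) (hd c),
      adr := applyop (aop m (st c) (mem c (hd c))) (adr c) \<rparr>"
  using assms by (simp add: step_def split: prod.splits)

lemma step_read:
  assumes "st c \<noteq> qacc m" "st c \<in> rdst m"
  shows "step M B m c = c\<lparr> st := fst (ionext m (st c)),
      mem := (\<lambda>j. if hd c div B * B \<le> j \<and> j < hd c div B * B + B
                   then ext c (adr c div B * B + (j - hd c div B * B)) else mem c j),
      hd := move M (snd (ionext m (st c))) (hd c) \<rparr>"
  using assms by (simp add: step_def Let_def split: prod.splits)

lemma step_write:
  assumes "st c \<noteq> qacc m" "st c \<in> wrst m" "st c \<notin> rdst m"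
  shows "step M B m c = c\<lparr> st := fst (ionext m (st c)),
      ext := (\<lambda>j. if adr c div B * B \<le> j \<and> j < adr c div B * B + B
                   then mem c (hd c div B * B + (j - adr c div B * B)) else ext c j),
      hd := move M (snd (ionext m (st c))) (hd c) \<rparr>"
  using assms by (simp add: step_def Let_def split: prod.splits)

lemma run_0: "run M B m x 0 = init m x"
  by (simp add: run_def)

lemma run_Suc: "run M B m x (Suc t) = step M B m (run M B m x t)"
  by (simp add: run_def)

lemma run_add: "run M B m x (t + n) = (step M B m ^^ n) (run M B m x t)"
  unfolding run_def by (metis add.commute comp_apply funpow_add)

lemma card_Collect_less_add:
  fixes a n :: nat
  shows "card {i. i < a + n \<and> P i} = card {i. i < a \<and> P i} + card {i. i < n \<and> P (a + i)}"
proof -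
  have split: "{i. i < a + n \<and> P i} = {i. i < a \<and> P i} \<union> (\<lambda>i. a + i) ` {i. i < n \<and> P (a + i)}"
  proof (intro set_eqI iffI)
    fix i assume i: "i \<in> {i. i < a + n \<and> P i}"
    show "i \<in> {i. i < a \<and> P i} \<union> (\<lambda>i. a + i) ` {i. i < n \<and> P (a + i)}"
    proof (cases "i < a")
      case False
      then show ?thesis using i by (intro UnI2 image_eqI[of _ _ "i - a"]) auto
    qed (use i in simp)
  qed auto
  have "card ((\<lambda>i. a + i) ` {i. i < n \<and> P (a + i)}) = card {i. i < n \<and> P (a + i)}"
    by (rule card_image) (auto simp: inj_on_def)
  then show ?thesis unfolding split by (subst card_Un_disjoint) auto
qed

lemma card_Collect_less_le: "card {i. i < n \<and> P i} \<le> (n::nat)"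
  using card_mono[of "{..<n}" "{i. i < n \<and> P i}"] by auto

lemma time_of_add_le: "time_of M B m x (t + n) \<le> time_of M B m x t + n"
  unfolding time_of_def card_Collect_less_add using card_Collect_less_le by (rule add_left_mono)

lemma io_of_add_le: "io_of M B m x (t + n) \<le> io_of M B m x t + n"
  unfolding io_of_def card_Collect_less_add using card_Collect_less_le by (rule add_left_mono)

lemma card_Collect_less_one: "card {i::nat. i < 1 \<and> P i} = (if P 0 then 1 else 0)"
proof -
  have "{i::nat. i < 1 \<and> P i} = (if P 0 then {0} else {})" by auto
  then show ?thesis by simp
qed

lemma time_of_Suc:
  "time_of M B m x (Suc t) = time_of M B m x t + (if is_io m (run M B m x t) then 0 else 1)"
  using card_Collect_less_add[of t 1 "\<lambda>i. \<not> is_io m (run M B m x i)"]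
    card_Collect_less_one[of "\<lambda>i. \<not> is_io m (run M B m x (t + i))"]
  by (simp add: time_of_def)

lemma io_of_Suc:
  "io_of M B m x (Suc t) = io_of M B m x t + (if is_io m (run M B m x t) then 1 else 0)"
  using card_Collect_less_add[of t 1 "\<lambda>i. is_io m (run M B m x i)"]
    card_Collect_less_one[of "\<lambda>i. is_io m (run M B m x (t + i))"]
  by (simp add: io_of_def)

lemma overhead_bounds:
  fixes c T I :: real and t i t' i' K B :: nat
  assumes "real t \<le> c * T" "real i \<le> c * I" "t' \<le> t + K * i" "i' \<le> K * i" "1 \<le> K" "1 \<le> B"
  shows "real t' \<le> (c * K) * (T + B * I)" "real i' \<le> (c * K) * (B * I)"
proof -
  have cT: "0 \<le> c * T" and cI: "0 \<le> c * I" using assms(1,2) of_nat_0_le_iff order_trans by blast+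
  have "real t \<le> real K * (c * T)"
    using assms(1,5) cT mult_right_mono[of 1 "real K" "c * T"] by simp
  moreover have "real K * real i \<le> real K * (real B * (c * I))"
    using assms(2,6) cI mult_right_mono[of 1 "real B" "c * I"] by (intro mult_left_mono) auto
  moreover have "real t' \<le> real t + real K * real i" "real i' \<le> real K * real i"
    using assms(3,4) by (simp_all flip: of_nat_mult of_nat_add)
  ultimately show "real t' \<le> (c * K) * (T + B * I)" "real i' \<le> (c * K) * (B * I)"
    by (simp_all add: algebra_simps)
qed

text \<open>A block IO at address \<open>a\<close>, with shadow \<open>y\<close> congruent to \<open>a\<close> modulo \<open>B\<close>, is replayed
  by micro-steps that carry the simulated configuration \<open>(q, vm, h, y)\<close> along: \<open>AlignDown\<close> walks
  down to the block start \<open>a - y mod B\<close>, \<open>ReadCell\<close>/\<open>StoreCell\<close> or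
  \<open>PutCell\<close>/\<open>WriteCell\<close>/\<open>NextCell\<close> transfer the \<open>B\<close> cells one at a time, \<open>StepBack\<close>
  returns to \<open>a\<close>, \<open>Probe\<close> walks down at most \<open>probe_limit\<close> cells with a zero test (the
  \<open>Z\<close>-steps) before each step, and \<open>Climb\<close> walks back up to \<open>a\<close>.\<close>

datatype micro = AlignDown nat | ReadCell nat | StoreCell nat | PutCell nat | WriteCell nat
  | NextCell nat | StepBack nat | Probe nat | ZReadNext nat | ZGotNext nat | ZReadHere nat nat
  | ZMark nat nat | ZWriteMark nat nat nat | ZDown nat nat nat | ZUp nat nat nat
  | ZReadBack nat nat nat | ZCompare nat nat nat | ZRestore nat nat nat | ProbeDown nat
  | Climb nat nat nat

fun micro_tag :: "micro \<Rightarrow> nat" where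
  "micro_tag (AlignDown _) = 0" | "micro_tag (ReadCell _) = 1" | "micro_tag (StoreCell _) = 2"
| "micro_tag (PutCell _) = 3" | "micro_tag (WriteCell _) = 4" | "micro_tag (NextCell _) = 5"
| "micro_tag (StepBack _) = 6" | "micro_tag (Probe _) = 7" | "micro_tag (ZReadNext _) = 8"
| "micro_tag (ZGotNext _) = 9" | "micro_tag (ZReadHere _ _) = 10" | "micro_tag (ZMark _ _) = 11"
| "micro_tag (ZWriteMark _ _ _) = 12" | "micro_tag (ZDown _ _ _) = 13" | "micro_tag (ZUp _ _ _) = 14"
| "micro_tag (ZReadBack _ _ _) = 15" | "micro_tag (ZCompare _ _ _) = 16"
| "micro_tag (ZRestore _ _ _) = 17" | "micro_tag (ProbeDown _) = 18" | "micro_tag (Climb _ _ _) = 19"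

fun micro_args :: "micro \<Rightarrow> nat list" where
  "micro_args (AlignDown a) = [a]" | "micro_args (ReadCell a) = [a]" | "micro_args (StoreCell a) = [a]"
| "micro_args (PutCell a) = [a]" | "micro_args (WriteCell a) = [a]" | "micro_args (NextCell a) = [a]"
| "micro_args (StepBack a) = [a]" | "micro_args (Probe a) = [a]" | "micro_args (ZReadNext a) = [a]"
| "micro_args (ZGotNext a) = [a]" | "micro_args (ZReadHere a b) = [a, b]"
| "micro_args (ZMark a b) = [a, b]" | "micro_args (ZWriteMark a b c) = [a, b, c]"
| "micro_args (ZDown a b c) = [a, b, c]" | "micro_args (ZUp a b c) = [a, b, c]"
| "micro_args (ZReadBack a b c) = [a, b, c]" | "micro_args (ZCompare a b c) = [a, b, c]"
| "micro_args (ZRestore a b c) = [a, b, c]" | "micro_args (ProbeDown a) = [a]"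
| "micro_args (Climb a b c) = [a, b, c]"

lemma inj_micro_code: "inj (\<lambda>\<mu>. (micro_tag \<mu>, micro_args \<mu>))"
proof (rule injI)
  fix \<mu> \<nu> :: micro
  show "(micro_tag \<mu>, micro_args \<mu>) = (micro_tag \<nu>, micro_args \<nu>) \<Longrightarrow> \<mu> = \<nu>"
    by (cases \<mu>; cases \<nu>) simp_all
qed

lemma finite_micro_bounded: "finite {\<mu>. \<forall>a\<in>set (micro_args \<mu>). a \<le> K}"
proof -
  have "{\<mu>. \<forall>a\<in>set (micro_args \<mu>). a \<le> K}
      \<subseteq> (\<lambda>\<mu>. (micro_tag \<mu>, micro_args \<mu>)) -` ({..19} \<times> {xs. set xs \<subseteq> {..K} \<and> length xs \<le> 3})"
    (is "_ \<subseteq> ?C")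
  proof (intro subsetI)
    fix \<mu> :: micro
    have "micro_tag \<mu> \<le> 19" "length (micro_args \<mu>) \<le> 3" by (cases \<mu>; simp)+
    then show "\<mu> \<in> {\<mu>. \<forall>a\<in>set (micro_args \<mu>). a \<le> K} \<Longrightarrow> \<mu> \<in> ?C" by auto
  qed
  moreover have "finite ({..19::nat} \<times> {xs. set xs \<subseteq> {..K} \<and> length xs \<le> 3})"
    by (intro finite_cartesian_product finite_lists_length_le) auto
  ultimately show ?thesis using inj_micro_code by (meson finite_subset finite_vimageI)
qed

fun micro_reads :: "micro \<Rightarrow> bool" where
  "micro_reads (ReadCell _) = True" | "micro_reads (ZReadNext _) = True"
| "micro_reads (ZReadHere _ _) = True" | "micro_reads (ZReadBack _ _ _) = True"
| "micro_reads _ = False"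

fun micro_writes :: "micro \<Rightarrow> bool" where
  "micro_writes (WriteCell _) = True" | "micro_writes (ZWriteMark _ _ _) = True"
| "micro_writes (ZRestore _ _ _) = True" | "micro_writes _ = False"

type_synonym base = "nat \<times> (nat \<Rightarrow> nat) \<times> nat \<times> nat"

datatype sim_st = Accept | Junk | Sim base | Macro base micro

fun sim_reads :: "sim_st \<Rightarrow> bool" where
  "sim_reads (Macro b \<mu>) = micro_reads \<mu>" | "sim_reads _ = False"

fun sim_writes :: "sim_st \<Rightarrow> bool" where
  "sim_writes (Macro b \<mu>) = micro_writes \<mu>" | "sim_writes _ = False"

lemma sim_reads_not_writes: "sim_reads s \<Longrightarrow> \<not> sim_writes s"
  by (cases s rule: sim_reads.cases) (auto elim: micro_reads.elims)

definition fresh_symbol :: "nat \<Rightarrow> nat \<Rightarrow> nat" where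
  "fresh_symbol u s = (if 0 \<noteq> u \<and> 0 \<noteq> s then 0 else if 1 \<noteq> u \<and> 1 \<noteq> s then 1 else 2)"

lemma fresh_symbol: "fresh_symbol u s \<noteq> u" "fresh_symbol u s \<noteq> s" "fresh_symbol u s \<le> 2"
  by (auto simp: fresh_symbol_def)

locale bt_machine =
  fixes \<Sigma> :: "nat set" and M B :: nat and m :: tlm
  assumes well_formed: "well_formed \<Sigma> m" and B_pos: "0 < B" and B_dvd_M: "B dvd M" and M_pos: "0 < M"
begin

lemma wf_facts:
  "finite (states m)" "finite (gam m)" "0 \<in> gam m" "\<Sigma> \<subseteq> gam m - {0}"
  "q0 m \<in> states m" "qacc m \<in> states m" "rdst m \<inter> wrst m = {}" "qacc m \<notin> rdst m" "qacc m \<notin> wrst m"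
  "\<And>q g. q \<in> states m \<Longrightarrow> g \<in> gam m \<Longrightarrow> fst (delta m q g) \<in> states m"
  "\<And>q g. q \<in> states m \<Longrightarrow> g \<in> gam m \<Longrightarrow> fst (snd (delta m q g)) \<in> gam m"
  "\<And>q. q \<in> states m \<Longrightarrow> fst (ionext m q) \<in> states m"
  using well_formed unfolding well_formed_def blank_def by auto

definition mem_space :: "(nat \<Rightarrow> nat) set" where
  "mem_space = {vm. (\<forall>i<M. vm i \<in> gam m) \<and> (\<forall>i\<ge>M. vm i = 0)}"

lemma finite_mem_space: "finite mem_space"
proof -
  have "mem_space = {vm. \<forall>i. (i \<in> {..<M} \<longrightarrow> vm i \<in> gam m) \<and> (i \<notin> {..<M} \<longrightarrow> vm i = 0)}"
    by (auto simp: mem_space_def not_less)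
  then show ?thesis using finite_set_of_finite_funs[of "{..<M}" "gam m" 0] wf_facts(2) by simp
qed

lemma mem_space_gam: "vm \<in> mem_space \<Longrightarrow> vm i \<in> gam m"
  using wf_facts(3) by (cases "i < M") (auto simp: mem_space_def)

definition valid :: "cfg \<Rightarrow> bool" where
  "valid c \<longleftrightarrow> st c \<in> states m \<and> mem c \<in> mem_space \<and> hd c < M \<and> (\<forall>i. ext c i \<in> gam m)"

lemma valid_init: "x \<in> lists \<Sigma> \<Longrightarrow> valid (init m x)"
  using wf_facts(3,4,5) M_pos unfolding valid_def init_def mem_space_def blank_def
  by (auto simp: in_set_conv_nth dest!: nth_mem)

lemma valid_step:
  assumes "valid c"
  shows "valid (step M B m c)"
proof -
  have c: "st c \<in> states m" "mem c \<in> mem_space" "hd c < M" "\<And>i. ext c i \<in> gam m"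
    using assms by (auto simp: valid_def)
  consider "st c = qacc m" | "st c \<noteq> qacc m" "st c \<in> rdst m"
    | "st c \<noteq> qacc m" "st c \<in> wrst m" "st c \<notin> rdst m"
    | "st c \<noteq> qacc m" "st c \<notin> rdst m" "st c \<notin> wrst m" by blast
  then show ?thesis
  proof cases
    case 1
    then show ?thesis using assms by (simp add: step_accepting)
  next
    case 2
    have "hd c div B * B + B \<le> M" using block_end_le[OF c(3) B_dvd_M B_pos] .
    then show ?thesis unfolding step_read[OF 2] valid_def using c wf_facts(12)
      by (auto simp: mem_space_def move_less M_pos)
  next
    case 3
    then show ?thesis unfolding step_write[OF 3] valid_def using c wf_facts(12) mem_space_gam
      by (auto simp: move_less M_pos)
  next
    case 4
    have "mem c (hd c) \<in> gam m" using c(2) mem_space_gam by blast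
    then show ?thesis unfolding step_plain[OF 4] valid_def using c wf_facts(10,11)
      by (auto simp: mem_space_def move_less M_pos)
  qed
qed

lemma valid_run: "x \<in> lists \<Sigma> \<Longrightarrow> valid (run M B m x t)"
  by (induction t) (auto simp: run_0 run_Suc valid_init valid_step)

text \<open>Between two IO operations the machine only touches its state, main memory and head, which
  range over a finite set; a halting run therefore cannot spend more than that many consecutive
  plain steps, since a repeated local configuration would make the plain phase loop forever.\<close>

definition local_space :: "(nat \<times> (nat \<Rightarrow> nat) \<times> nat) set" where
  "local_space = states m \<times> mem_space \<times> {..<M}"

lemma finite_local_space: "finite local_space"
  unfolding local_space_def using finite_mem_space wf_facts(1) by auto

definition local_part :: "cfg \<Rightarrow> nat \<times> (nat \<Rightarrow> nat) \<times> nat" where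
  "local_part c = (st c, mem c, hd c)"

definition local_step :: "nat \<times> (nat \<Rightarrow> nat) \<times> nat \<Rightarrow> nat \<times> (nat \<Rightarrow> nat) \<times> nat" where
  "local_step = (\<lambda>(q, vm, h). (fst (delta m q (vm h)), vm(h := fst (snd (delta m q (vm h)))),
                               move M (snd (snd (delta m q (vm h)))) h))"

lemma local_part_step_plain:
  "st c \<noteq> qacc m \<Longrightarrow> st c \<notin> rdst m \<Longrightarrow> st c \<notin> wrst m
    \<Longrightarrow> local_part (step M B m c) = local_step (local_part c)"
  by (simp add: step_plain local_part_def local_step_def)

lemma plain_phase_length_le:
  assumes x: "x \<in> lists \<Sigma>" and halts: "halts_at M B m x T" and "t + n \<le> T"
    and plain: "\<And>i. t \<le> i \<Longrightarrow> i < t + n \<Longrightarrow> \<not> is_io m (run M B m x i)"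
  shows "n \<le> card local_space"
proof (rule ccontr)
  assume "\<not> n \<le> card local_space"
  define y where "y s = local_part (run M B m x (t + s))" for s
  have running: "st (run M B m x (t + i)) \<noteq> qacc m" "st (run M B m x (t + i)) \<notin> rdst m"
    "st (run M B m x (t + i)) \<notin> wrst m" if "i < n" for i
    using halts that \<open>t + n \<le> T\<close> plain[of "t + i"] unfolding halts_at_def is_io_def by auto
  have y_Suc: "y (Suc i) = local_step (y i)" if "i < n" for i
    using running[OF that] by (simp add: y_def run_Suc local_part_step_plain)
  have "y ` {..<n} \<subseteq> local_space"
    using valid_run[OF x] by (auto simp: y_def local_part_def valid_def local_space_def)
  then have "\<not> inj_on y {..<n}"
    using \<open>\<not> n \<le> card local_space\<close> card_inj_on_le[of y "{..<n}"] finite_local_space by auto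
  then obtain i1 i2 where i12: "i1 < i2" "i2 < n" "y i1 = y i2"
    unfolding inj_on_def by (metis lessThan_iff linorder_neqE_nat)
  have periodic: "\<exists>i<i2. y s = y i" for s
  proof (induction s)
    case 0
    show ?case using i12 by (intro exI[of _ 0]) auto
  next
    case (Suc s)
    then obtain i where i: "i < i2" "y s = y i" by auto
    then have "st (run M B m x (t + s)) = st (run M B m x (t + i))"
      by (simp add: y_def local_part_def)
    then have "y (Suc s) = local_step (y s)"
      using running[of i] i12 i by (simp add: y_def run_Suc local_part_step_plain)
    also have "\<dots> = y (Suc i)" using y_Suc[of i] i i12 by simp
    finally show ?case using i i12 by (metis Suc_lessI)
  qed
  obtain i where i: "i < i2" "y (T - t) = y i" using periodic by blast
  then have "st (run M B m x T) = st (run M B m x (t + i))"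
    using \<open>t + n \<le> T\<close> by (simp add: y_def local_part_def)
  then show False using running[of i] i i12 halts by (simp add: halts_at_def)
qed

definition probe_limit :: nat where "probe_limit = B * (card local_space + 1)"
definition shadow_bound :: nat where "shadow_bound = 2 * probe_limit + B"
definition sim_gam :: "nat set" where "sim_gam = gam m \<union> {0, 1, 2}"
definition arg_bound :: nat where "arg_bound = B + probe_limit + Max sim_gam + 2"

definition base_space :: "base set" where
  "base_space = {(q, vm, h, y). q \<in> states m \<and> vm \<in> mem_space \<and> h < M \<and> y \<le> shadow_bound}"

definition micro_ok :: "micro \<Rightarrow> bool" where
  "micro_ok \<mu> \<longleftrightarrow> (\<forall>a\<in>set (micro_args \<mu>). a \<le> arg_bound)"

definition sim_space :: "sim_st set" where
  "sim_space = {Accept, Junk} \<union> Sim ` base_space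
     \<union> (\<lambda>(b, \<mu>). Macro b \<mu>) ` (base_space \<times> Collect micro_ok)"

lemma sim_space_simps [simp]: "Accept \<in> sim_space" "Junk \<in> sim_space"
  "Sim b \<in> sim_space \<longleftrightarrow> b \<in> base_space" "Macro b \<mu> \<in> sim_space \<longleftrightarrow> b \<in> base_space \<and> micro_ok \<mu>"
  by (auto simp: sim_space_def)

lemma finite_base_space: "finite base_space"
proof -
  have "base_space \<subseteq> states m \<times> mem_space \<times> {..<M} \<times> {..shadow_bound}"
    by (auto simp: base_space_def)
  then show ?thesis using wf_facts(1) finite_mem_space finite_subset by fastforce
qed

lemma finite_sim_space: "finite sim_space"
  unfolding sim_space_def micro_ok_def using finite_base_space finite_micro_bounded by auto

definition enc :: "sim_st \<Rightarrow> nat" where "enc = to_nat_on sim_space"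
definition dec :: "nat \<Rightarrow> sim_st" where "dec = from_nat_into sim_space"

lemma dec_enc [simp]: "s \<in> sim_space \<Longrightarrow> dec (enc s) = s"
  by (simp add: enc_def dec_def countable_finite finite_sim_space)

lemma enc_eq_iff: "s \<in> sim_space \<Longrightarrow> s' \<in> sim_space \<Longrightarrow> enc s = enc s' \<longleftrightarrow> s = s'"
  by (metis dec_enc)

definition sim_state :: "nat \<Rightarrow> (nat \<Rightarrow> nat) \<Rightarrow> nat \<Rightarrow> nat \<Rightarrow> sim_st" where
  "sim_state q vm h y = (if q = qacc m then Accept else Sim (q, vm, h, y))"

text \<open>Flag \<open>f = 1\<close> means that the probe found no 0 within \<open>probe_limit\<close> steps.\<close>

definition probe_result :: "base \<Rightarrow> nat \<Rightarrow> nat \<Rightarrow> sim_st" where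
  "probe_result = (\<lambda>(q, vm, h, y) c f.
     sim_state (fst (ionext m q)) vm (move M (snd (ionext m q)) h)
       (if f = 1 then probe_limit + y mod B else c))"

fun micro_step :: "base \<Rightarrow> micro \<Rightarrow> nat \<Rightarrow> sim_st \<times> nat \<times> addrop" where
  "micro_step b (AlignDown (Suc n)) g = (Macro b (AlignDown n), 0, ADec)"
| "micro_step (q, vm, h, y) (AlignDown 0) g =
     (Macro (q, vm, h, y) (if q \<in> rdst m then ReadCell 0 else PutCell 0), 0, AKeep)"
| "micro_step (q, vm, h, y) (StoreCell j) g = (Macro (q, vm(h div B * B + j := g), h, y)
     (if Suc j < B then ReadCell (Suc j) else StepBack (B - y mod B)), 0, AInc)"
| "micro_step (q, vm, h, y) (PutCell j) g = (Macro (q, vm, h, y) (WriteCell j), vm (h div B * B + j), AKeep)"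
| "micro_step (q, vm, h, y) (NextCell j) g = (Macro (q, vm, h, y)
     (if Suc j < B then PutCell (Suc j) else StepBack (B - y mod B)), 0, AInc)"
| "micro_step b (StepBack (Suc n)) g = (Macro b (StepBack n), 0, ADec)"
| "micro_step b (StepBack 0) g = (Macro b (Probe 0), 0, AKeep)"
| "micro_step b (Probe c) g =
     (if c < probe_limit then (Macro b (ZReadNext c), 0, AInc)
      else (Macro b (Climb probe_limit probe_limit 1), 0, AKeep))"
| "micro_step b (ZGotNext c) g = (Macro b (ZReadHere c g), 0, ADec)"
| "micro_step b (ZMark c u) g = (Macro b (ZWriteMark c g (fresh_symbol u g)), fresh_symbol u g, AKeep)"
| "micro_step b (ZDown c s z) g = (Macro b (ZUp c s z), 0, ADec)"
| "micro_step b (ZUp c s z) g = (Macro b (ZReadBack c s z), 0, AInc)"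
| "micro_step b (ZCompare c s z) g =
     (if g = z then (Macro b (ZRestore c s 1), s, AKeep) else (Macro b (ZRestore c s 0), s, ADec))"
| "micro_step b (ProbeDown c) g = (Macro b (Probe (Suc c)), 0, ADec)"
| "micro_step b (Climb (Suc n) c f) g = (Macro b (Climb n c f), 0, AInc)"
| "micro_step b (Climb 0 c f) g = (probe_result b c f, 0, AKeep)"
| "micro_step b _ g = (Junk, 0, AKeep)"

fun micro_io_next :: "base \<Rightarrow> micro \<Rightarrow> sim_st" where
  "micro_io_next b (ReadCell j) = Macro b (StoreCell j)"
| "micro_io_next b (WriteCell j) = Macro b (NextCell j)"
| "micro_io_next b (ZReadNext c) = Macro b (ZGotNext c)"
| "micro_io_next b (ZReadHere c u) = Macro b (ZMark c u)"
| "micro_io_next b (ZWriteMark c s z) = Macro b (ZDown c s z)"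
| "micro_io_next b (ZReadBack c s z) = Macro b (ZCompare c s z)"
| "micro_io_next b (ZRestore c s f) = Macro b (if f = 1 then ProbeDown c else Climb c c 0)"
| "micro_io_next b _ = Junk"

fun sim_step :: "sim_st \<Rightarrow> nat \<Rightarrow> sim_st \<times> nat \<times> addrop" where
  "sim_step (Sim (q, vm, h, y)) g =
     (if q \<in> rdst m \<union> wrst m then (Macro (q, vm, h, y) (AlignDown (y mod B)), 0, AKeep)
      else (sim_state (fst (delta m q (vm h))) (vm(h := fst (snd (delta m q (vm h)))))
              (move M (snd (snd (delta m q (vm h)))) h) (applyop (aop m q (vm h)) y),
            0, aop m q (vm h)))"
| "sim_step (Macro b \<mu>) g = micro_step b \<mu> g"
| "sim_step _ g = (Junk, 0, AKeep)"

fun sim_io_next :: "sim_st \<Rightarrow> sim_st" where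
  "sim_io_next (Macro b \<mu>) = micro_io_next b \<mu>"
| "sim_io_next _ = Junk"

definition sim_delta :: "nat \<Rightarrow> nat \<Rightarrow> nat \<times> nat \<times> dir" where
  "sim_delta q g = (case sim_step (dec q) g of (s', w, _) \<Rightarrow>
      if s' \<in> sim_space \<and> w \<in> sim_gam then (enc s', w, S) else (enc Junk, 0, S))"

definition sim_ionext :: "nat \<Rightarrow> nat \<times> dir" where
  "sim_ionext q =
     (if sim_io_next (dec q) \<in> sim_space then (enc (sim_io_next (dec q)), S) else (enc Junk, S))"

definition sim_machine :: tlm where
  "sim_machine = \<lparr> states = enc ` sim_space, gam = sim_gam,
     q0 = enc (sim_state (q0 m) (\<lambda>_. 0) 0 0), qacc = enc Accept,
     rdst = enc ` {s \<in> sim_space. sim_reads s}, wrst = enc ` {s \<in> sim_space. sim_writes s},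
     delta = sim_delta, aop = \<lambda>q g. snd (snd (sim_step (dec q) g)), ionext = sim_ionext \<rparr>"

lemma sim_machine_simps [simp]:
  "qacc sim_machine = enc Accept" "rdst sim_machine = enc ` {s \<in> sim_space. sim_reads s}"
  "wrst sim_machine = enc ` {s \<in> sim_space. sim_writes s}" "delta sim_machine = sim_delta"
  "aop sim_machine = (\<lambda>q g. snd (snd (sim_step (dec q) g)))" "ionext sim_machine = sim_ionext"
  by (simp_all add: sim_machine_def)

lemma finite_sim_gam: "finite sim_gam" using wf_facts(2) by (simp add: sim_gam_def)

lemma sim_gam_le_arg_bound: "g \<in> sim_gam \<Longrightarrow> g \<le> arg_bound"
  using Max_ge[OF finite_sim_gam, of g] by (simp add: arg_bound_def)

lemma arg_bound_ge: "B \<le> arg_bound" "probe_limit \<le> arg_bound" "2 \<le> arg_bound"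
  by (auto simp: arg_bound_def)

lemma gam_sim_gam: "g \<in> gam m \<Longrightarrow> g \<in> sim_gam" and zero_sim_gam: "0 \<in> sim_gam"
  by (simp_all add: sim_gam_def)

lemma sim_state_in_space:
  "q \<in> states m \<Longrightarrow> vm \<in> mem_space \<Longrightarrow> h < M \<Longrightarrow> y \<le> shadow_bound \<Longrightarrow> sim_state q vm h y \<in> sim_space"
  by (simp add: sim_state_def base_space_def)

lemma zero_mem_space: "(\<lambda>_. 0) \<in> mem_space" using wf_facts(3) by (simp add: mem_space_def)

lemma well_formed_sim_machine: "well_formed \<Sigma> sim_machine"
proof -
  have "enc ` {s \<in> sim_space. sim_reads s} \<inter> enc ` {s \<in> sim_space. sim_writes s} = {}"
    using enc_eq_iff sim_reads_not_writes by fastforce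
  then show ?thesis
    unfolding well_formed_def sim_machine_def
    using finite_sim_space finite_sim_gam wf_facts(4,5) sim_state_in_space[OF wf_facts(5) zero_mem_space M_pos]
    by (auto simp: blank_def sim_gam_def sim_delta_def sim_ionext_def enc_eq_iff split: prod.splits)
qed

abbreviation sim_exec :: "cfg \<Rightarrow> cfg" where "sim_exec \<equiv> step M 1 sim_machine"

definition sim_reach :: "cfg \<Rightarrow> nat \<Rightarrow> cfg \<Rightarrow> bool" where
  "sim_reach C n C' \<longleftrightarrow> (sim_exec ^^ n) C = C' \<and> (\<forall>i<n. st ((sim_exec ^^ i) C) \<noteq> enc Accept)"

definition sim_cfg :: "sim_st \<Rightarrow> (nat \<Rightarrow> nat) \<Rightarrow> nat \<Rightarrow> cfg \<Rightarrow> bool" where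
  "sim_cfg s E a C \<longleftrightarrow> st C = enc s \<and> hd C = 0 \<and> ext C = E \<and> adr C = a"

lemma sim_reach_0: "sim_reach C 0 C"
  by (simp add: sim_reach_def)

lemma sim_reach_trans:
  assumes "sim_reach C n C'" "sim_reach C' n' C''"
  shows "sim_reach C (n + n') C''"
proof -
  have shift: "(sim_exec ^^ (n + i)) C = (sim_exec ^^ i) C'" for i
    using assms(1) by (simp add: sim_reach_def funpow_add add.commute[of n])
  have "st ((sim_exec ^^ i) C) \<noteq> enc Accept" if "i < n + n'" for i
  proof (cases "i < n")
    case False
    then show ?thesis using assms(2) that shift[of "i - n"] by (simp add: sim_reach_def)
  qed (use assms(1) in \<open>simp add: sim_reach_def\<close>)
  then show ?thesis using assms(2) shift[of n'] by (simp add: sim_reach_def)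
qed

lemma sim_reach_Suc: "sim_reach C 1 C' \<Longrightarrow> sim_reach C' n C'' \<Longrightarrow> sim_reach C (Suc n) C''"
  using sim_reach_trans[of C 1 C' n C''] by simp

lemma sim_plain_step:
  assumes "s \<in> sim_space" "s \<noteq> Accept" "\<not> sim_reads s" "\<not> sim_writes s" "sim_cfg s E a C"
    "sim_step s (mem C 0) = (s', w, op)" "s' \<in> sim_space" "w \<in> sim_gam"
  shows "sim_reach C 1 (sim_exec C)" "sim_cfg s' E (applyop op a) (sim_exec C)" "mem (sim_exec C) 0 = w"
proof -
  have C: "st C = enc s" "hd C = 0" "ext C = E" "adr C = a" using assms(5) by (auto simp: sim_cfg_def)
  have plain: "st C \<noteq> qacc sim_machine" "st C \<notin> rdst sim_machine" "st C \<notin> wrst sim_machine"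
    using assms(1-4) C(1) enc_eq_iff[of s] by auto
  have "delta sim_machine (st C) (mem C (hd C)) = (enc s', w, S)"
    "aop sim_machine (st C) (mem C (hd C)) = op"
    using assms C by (simp_all add: sim_delta_def)
  then have "sim_exec C = C\<lparr>st := enc s', mem := (mem C)(0 := w), hd := 0, adr := applyop op a\<rparr>"
    using step_plain[OF plain] C by simp
  then show "sim_reach C 1 (sim_exec C)" "sim_cfg s' E (applyop op a) (sim_exec C)" "mem (sim_exec C) 0 = w"
    using plain C by (simp_all add: sim_reach_def sim_cfg_def)
qed

lemma sim_read_step:
  assumes "s \<in> sim_space" "sim_reads s" "sim_cfg s E a C" "sim_io_next s \<in> sim_space"
  shows "sim_reach C 1 (sim_exec C)" "sim_cfg (sim_io_next s) E a (sim_exec C)" "mem (sim_exec C) 0 = E a"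
proof -
  have C: "st C = enc s" "hd C = 0" "ext C = E" "adr C = a" using assms(3) by (auto simp: sim_cfg_def)
  have read: "st C \<noteq> qacc sim_machine" "st C \<in> rdst sim_machine"
    using assms(1,2) C(1) enc_eq_iff[of s Accept] by auto
  have "ionext sim_machine (st C) = (enc (sim_io_next s), S)"
    using assms C by (simp add: sim_ionext_def)
  then have "sim_exec C = C\<lparr>st := enc (sim_io_next s), mem := (mem C)(0 := E a), hd := 0\<rparr>"
    using step_read[OF read] C by (simp add: fun_eq_iff)
  then show "sim_reach C 1 (sim_exec C)" "sim_cfg (sim_io_next s) E a (sim_exec C)" "mem (sim_exec C) 0 = E a"
    using read C by (simp_all add: sim_reach_def sim_cfg_def)
qed

lemma sim_write_step:
  assumes "s \<in> sim_space" "sim_writes s" "sim_cfg s E a C" "sim_io_next s \<in> sim_space"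
  shows "sim_reach C 1 (sim_exec C)" "sim_cfg (sim_io_next s) (E(a := mem C 0)) a (sim_exec C)"
proof -
  have C: "st C = enc s" "hd C = 0" "ext C = E" "adr C = a" using assms(3) by (auto simp: sim_cfg_def)
  have wr: "st C \<noteq> qacc sim_machine" "st C \<in> wrst sim_machine" "st C \<notin> rdst sim_machine"
    using assms(1,2) C(1) enc_eq_iff[of s] sim_reads_not_writes by auto
  have "ionext sim_machine (st C) = (enc (sim_io_next s), S)"
    using assms C by (simp add: sim_ionext_def)
  then have "sim_exec C = C\<lparr>st := enc (sim_io_next s), ext := E(a := mem C 0), hd := 0\<rparr>"
    using step_write[OF wr] C by (auto simp: fun_eq_iff)
  then show "sim_reach C 1 (sim_exec C)" "sim_cfg (sim_io_next s) (E(a := mem C 0)) a (sim_exec C)"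
    using wr C by (simp_all add: sim_reach_def sim_cfg_def)
qed

lemma macro_plain_step:
  assumes "b \<in> base_space" "micro_ok \<mu>" "\<not> micro_reads \<mu>" "\<not> micro_writes \<mu>" "sim_cfg (Macro b \<mu>) E a C"
    "micro_step b \<mu> (mem C 0) = (s', w, op)" "s' \<in> sim_space" "w \<in> sim_gam"
  shows "sim_reach C 1 (sim_exec C)" "sim_cfg s' E (applyop op a) (sim_exec C)" "mem (sim_exec C) 0 = w"
  using sim_plain_step[where s = "Macro b \<mu>"] assms by auto

lemma macro_read_step:
  assumes "b \<in> base_space" "micro_ok \<mu>" "micro_reads \<mu>" "sim_cfg (Macro b \<mu>) E a C"
    "micro_io_next b \<mu> \<in> sim_space"
  shows "sim_reach C 1 (sim_exec C)" "sim_cfg (micro_io_next b \<mu>) E a (sim_exec C)" "mem (sim_exec C) 0 = E a"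
  using sim_read_step[where s = "Macro b \<mu>"] assms by auto

lemma macro_write_step:
  assumes "b \<in> base_space" "micro_ok \<mu>" "micro_writes \<mu>" "sim_cfg (Macro b \<mu>) E a C"
    "micro_io_next b \<mu> \<in> sim_space"
  shows "sim_reach C 1 (sim_exec C)" "sim_cfg (micro_io_next b \<mu>) (E(a := mem C 0)) a (sim_exec C)"
  using sim_write_step[where s = "Macro b \<mu>"] assms by auto

lemma macro_countdown:
  assumes "b \<in> base_space" "\<And>k. k \<le> n \<Longrightarrow> micro_ok (\<mu> k)"
    and "\<And>k. k < n \<Longrightarrow> \<not> micro_reads (\<mu> (Suc k)) \<and> \<not> micro_writes (\<mu> (Suc k))"
    and "\<And>k g. k < n \<Longrightarrow> micro_step b (\<mu> (Suc k)) g = (Macro b (\<mu> k), 0, op)"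
  shows "sim_cfg (Macro b (\<mu> n)) E a C
    \<Longrightarrow> \<exists>C'. sim_reach C n C' \<and> sim_cfg (Macro b (\<mu> 0)) E ((applyop op ^^ n) a) C'"
  using assms(2-4)
proof (induction n arbitrary: a C)
  case 0
  then show ?case using sim_reach_0 by auto
next
  case (Suc n)
  have "micro_ok (\<mu> n)" "\<not> micro_reads (\<mu> (Suc n))" "\<not> micro_writes (\<mu> (Suc n))"
    using Suc.prems(2,3) by auto
  then have step: "sim_reach C 1 (sim_exec C)" "sim_cfg (Macro b (\<mu> n)) E (applyop op a) (sim_exec C)"
    using macro_plain_step[OF assms(1) Suc.prems(2)[of "Suc n"] _ _ Suc.prems(1) Suc.prems(4)[of n "mem C 0"]]
      assms(1) zero_sim_gam by auto
  obtain C' where "sim_reach (sim_exec C) n C'"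
      "sim_cfg (Macro b (\<mu> 0)) E ((applyop op ^^ n) (applyop op a)) C'"
    using Suc.IH[OF step(2)] Suc.prems(2-4) by force
  then show ?case using sim_reach_Suc[OF step(1)] by (auto simp: funpow_swap1)
qed

definition mem_load :: "(nat \<Rightarrow> nat) \<Rightarrow> nat \<Rightarrow> nat \<Rightarrow> (nat \<Rightarrow> nat) \<Rightarrow> nat \<Rightarrow> nat \<Rightarrow> nat" where
  "mem_load vm h A E j =
     (\<lambda>i. if h div B * B \<le> i \<and> i < h div B * B + j then E (A + (i - h div B * B)) else vm i)"

definition ext_store :: "(nat \<Rightarrow> nat) \<Rightarrow> nat \<Rightarrow> nat \<Rightarrow> (nat \<Rightarrow> nat) \<Rightarrow> nat \<Rightarrow> nat \<Rightarrow> nat" where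
  "ext_store vm h A E j = (\<lambda>i. if A \<le> i \<and> i < A + j then vm (h div B * B + (i - A)) else E i)"

lemma mem_load_0 [simp]: "mem_load vm h A E 0 = vm"
  by (simp add: mem_load_def fun_eq_iff)

lemma mem_load_Suc: "(mem_load vm h A E j)(h div B * B + j := E (A + j)) = mem_load vm h A E (Suc j)"
  by (auto simp: mem_load_def fun_eq_iff)

lemma ext_store_0 [simp]: "ext_store vm h A E 0 = E"
  by (simp add: ext_store_def fun_eq_iff)

lemma ext_store_Suc: "(ext_store vm h A E j)(A + j := vm (h div B * B + j)) = ext_store vm h A E (Suc j)"
  by (auto simp: ext_store_def fun_eq_iff)

lemma mem_load_in_base_space:
  assumes "(q, vm, h, y) \<in> base_space" "\<And>i. E i \<in> gam m" "j \<le> B"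
  shows "(q, mem_load vm h A E j, h, y) \<in> base_space"
proof -
  have "h < M" "vm \<in> mem_space" using assms(1) by (auto simp: base_space_def)
  moreover have "h div B * B + B \<le> M" using block_end_le[OF \<open>h < M\<close> B_dvd_M B_pos] .
  ultimately show ?thesis using assms unfolding base_space_def mem_space_def mem_load_def by auto
qed

lemma read_block_loop:
  assumes base: "(q, vm, h, y) \<in> base_space" and E: "\<And>i. E i \<in> gam m"
  shows "j + d = B \<Longrightarrow> j < B \<Longrightarrow> sim_cfg (Macro (q, mem_load vm h A E j, h, y) (ReadCell j)) E (A + j) C
    \<Longrightarrow> \<exists>C'. sim_reach C (2 * d) C'
       \<and> sim_cfg (Macro (q, mem_load vm h A E B, h, y) (StepBack (B - y mod B))) E (A + B) C'"
proof (induction d arbitrary: j C)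
  case 0
  then show ?case by simp
next
  case (Suc d)
  let ?b = "(q, mem_load vm h A E j, h, y)"
  let ?next = "if Suc j < B then ReadCell (Suc j) else StepBack (B - y mod B)"
  have b: "?b \<in> base_space" "(q, mem_load vm h A E (Suc j), h, y) \<in> base_space"
    using mem_load_in_base_space[OF base E] Suc.prems by simp_all
  have ok: "micro_ok (ReadCell j)" "micro_ok (StoreCell j)" "micro_ok ?next"
    using Suc.prems arg_bound_ge B_pos by (auto simp: micro_ok_def)
  have read: "sim_reach C 1 (sim_exec C)"
      "sim_cfg (Macro ?b (StoreCell j)) E (A + j) (sim_exec C)" "mem (sim_exec C) 0 = E (A + j)"
    using macro_read_step[OF b(1) ok(1) _ Suc.prems(3)] b ok by auto
  have "micro_step ?b (StoreCell j) (mem (sim_exec C) 0)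
      = (Macro (q, mem_load vm h A E (Suc j), h, y) ?next, 0, AInc)"
    using read(3) by (simp add: mem_load_Suc)
  then have stored: "sim_reach (sim_exec C) 1 (sim_exec (sim_exec C))"
      "sim_cfg (Macro (q, mem_load vm h A E (Suc j), h, y) ?next) E (A + Suc j) (sim_exec (sim_exec C))"
    using macro_plain_step[OF b(1) ok(2) _ _ read(2)] b ok zero_sim_gam by (auto simp: applyop_def)
  have reach2: "sim_reach C 2 (sim_exec (sim_exec C))"
    using sim_reach_trans[OF read(1) stored(1)] by (simp add: numeral_2_eq_2)
  show ?case
  proof (cases "Suc j < B")
    case True
    then obtain C' where "sim_reach (sim_exec (sim_exec C)) (2 * d) C'"
        "sim_cfg (Macro (q, mem_load vm h A E B, h, y) (StepBack (B - y mod B))) E (A + B) C'"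
      using Suc.IH[of "Suc j"] Suc.prems stored(2) by auto
    then show ?thesis using sim_reach_trans[OF reach2] by (auto simp: mult_2)
  next
    case False
    then have "d = 0" "Suc j = B" using Suc.prems by auto
    then show ?thesis using reach2 stored(2) False by auto
  qed
qed

lemma write_block_loop:
  assumes base: "(q, vm, h, y) \<in> base_space"
  shows "j + d = B \<Longrightarrow> j < B \<Longrightarrow> sim_cfg (Macro (q, vm, h, y) (PutCell j)) (ext_store vm h A E j) (A + j) C
    \<Longrightarrow> \<exists>C'. sim_reach C (3 * d) C'
       \<and> sim_cfg (Macro (q, vm, h, y) (StepBack (B - y mod B))) (ext_store vm h A E B) (A + B) C'"
proof (induction d arbitrary: j C)
  case 0
  then show ?case by simp
next
  case (Suc d)
  let ?b = "(q, vm, h, y)"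
  let ?E = "ext_store vm h A E j"
  let ?next = "if Suc j < B then PutCell (Suc j) else StepBack (B - y mod B)"
  have ok: "micro_ok (PutCell j)" "micro_ok (WriteCell j)" "micro_ok (NextCell j)" "micro_ok ?next"
    using Suc.prems arg_bound_ge B_pos by (auto simp: micro_ok_def)
  have "vm \<in> mem_space" using base by (simp add: base_space_def)
  then have "vm (h div B * B + j) \<in> sim_gam" using mem_space_gam gam_sim_gam by blast
  then have put: "sim_reach C 1 (sim_exec C)"
      "sim_cfg (Macro ?b (WriteCell j)) ?E (A + j) (sim_exec C)" "mem (sim_exec C) 0 = vm (h div B * B + j)"
    using macro_plain_step[OF base ok(1) _ _ Suc.prems(3)] base ok by (auto simp: applyop_def)
  let ?C2 = "sim_exec (sim_exec C)"
  have wrote: "sim_reach (sim_exec C) 1 ?C2"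
      "sim_cfg (Macro ?b (NextCell j)) (ext_store vm h A E (Suc j)) (A + j) ?C2"
    using macro_write_step[OF base ok(2) _ put(2)] base ok put(3) by (auto simp: ext_store_Suc)
  have stepped: "sim_reach ?C2 1 (sim_exec ?C2)"
      "sim_cfg (Macro ?b ?next) (ext_store vm h A E (Suc j)) (A + Suc j) (sim_exec ?C2)"
    using macro_plain_step[OF base ok(3) _ _ wrote(2)] base ok zero_sim_gam by (auto simp: applyop_def)
  have reach3: "sim_reach C 3 (sim_exec ?C2)"
    using sim_reach_trans[OF sim_reach_trans[OF put(1) wrote(1)] stepped(1)] by (simp add: numeral_3_eq_3)
  show ?case
  proof (cases "Suc j < B")
    case True
    then obtain C' where "sim_reach (sim_exec ?C2) (3 * d) C'"
        "sim_cfg (Macro ?b (StepBack (B - y mod B))) (ext_store vm h A E B) (A + B) C'"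
      using Suc.IH[of "Suc j"] Suc.prems stepped(2) by auto
    then show ?thesis using sim_reach_trans[OF reach3] by auto
  next
    case False
    then show ?thesis using reach3 stepped(2) Suc.prems by auto
  qed
qed

text \<open>Zero test: since decrementing saturates at 0, a marker \<open>z\<close> written at \<open>p\<close> is read back after
  one step down and one step up iff \<open>p \<noteq> 0\<close>; \<open>z\<close> differs from the old contents of \<open>p\<close> and \<open>p + 1\<close>,
  and the old contents of \<open>p\<close> is restored afterwards.\<close>

lemma zero_test_read:
  assumes b: "b \<in> base_space" and c: "c < probe_limit" and E: "\<And>i. E i \<in> gam m"
    and C: "sim_cfg (Macro b (Probe c)) E p C"
  shows "\<exists>C'. sim_reach C 4 C' \<and> sim_cfg (Macro b (ZMark c (E (Suc p)))) E p C' \<and> mem C' 0 = E p"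
proof -
  have ok: "micro_ok (Probe c)" "micro_ok (ZReadNext c)" "micro_ok (ZGotNext c)"
    "micro_ok (ZReadHere c (E (Suc p)))" "micro_ok (ZMark c (E (Suc p)))"
    using c E[of "Suc p"] arg_bound_ge gam_sim_gam sim_gam_le_arg_bound by (auto simp: micro_ok_def)
  define C1 where "C1 = sim_exec C"
  have s1: "sim_reach C 1 C1" "sim_cfg (Macro b (ZReadNext c)) E (Suc p) C1"
    unfolding C1_def using macro_plain_step[OF b ok(1) _ _ C] c b ok zero_sim_gam by (auto simp: applyop_def)
  define C2 where "C2 = sim_exec C1"
  have s2: "sim_reach C1 1 C2" "sim_cfg (Macro b (ZGotNext c)) E (Suc p) C2" "mem C2 0 = E (Suc p)"
    unfolding C2_def using macro_read_step[OF b ok(2) _ s1(2)] b ok by auto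
  define C3 where "C3 = sim_exec C2"
  have s3: "sim_reach C2 1 C3" "sim_cfg (Macro b (ZReadHere c (E (Suc p)))) E p C3"
    unfolding C3_def using macro_plain_step[OF b ok(3) _ _ s2(2)] s2(3) b ok zero_sim_gam
    by (auto simp: applyop_def)
  define C4 where "C4 = sim_exec C3"
  have s4: "sim_reach C3 1 C4" "sim_cfg (Macro b (ZMark c (E (Suc p)))) E p C4" "mem C4 0 = E p"
    unfolding C4_def using macro_read_step[OF b ok(4) _ s3(2)] b ok by auto
  have "sim_reach C 4 C4"
    using sim_reach_trans[OF sim_reach_trans[OF sim_reach_trans[OF s1(1) s2(1)] s3(1)] s4(1)]
    by (simp add: eval_nat_numeral)
  then show ?thesis using s4 by blast
qed

lemma zero_test_mark:
  assumes b: "b \<in> base_space" and c: "c < probe_limit" and E: "\<And>i. E i \<in> gam m"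
    and C: "sim_cfg (Macro b (ZMark c u)) E p C" "mem C 0 = E p" and u: "u \<in> gam m"
  defines "z \<equiv> fresh_symbol u (E p)"
  shows "\<exists>C'. sim_reach C 5 C' \<and> sim_cfg (Macro b (ZCompare c (E p) z)) (E(p := z)) (p - 1 + 1) C'
    \<and> mem C' 0 = (E(p := z)) (p - 1 + 1)"
proof -
  have z: "z \<in> sim_gam" "z \<le> arg_bound"
    using fresh_symbol(3)[of u "E p"] arg_bound_ge by (auto simp: z_def sim_gam_def)
  have ok: "micro_ok (ZMark c u)" "micro_ok (ZWriteMark c (E p) z)" "micro_ok (ZDown c (E p) z)"
    "micro_ok (ZUp c (E p) z)" "micro_ok (ZReadBack c (E p) z)" "micro_ok (ZCompare c (E p) z)"
    using c u E[of p] z arg_bound_ge gam_sim_gam sim_gam_le_arg_bound by (auto simp: micro_ok_def)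
  define C1 where "C1 = sim_exec C"
  have s1: "sim_reach C 1 C1" "sim_cfg (Macro b (ZWriteMark c (E p) z)) E p C1" "mem C1 0 = z"
    unfolding C1_def using macro_plain_step[OF b ok(1) _ _ C(1)] C(2) z b ok
    by (auto simp: applyop_def z_def)
  define C2 where "C2 = sim_exec C1"
  have s2: "sim_reach C1 1 C2" "sim_cfg (Macro b (ZDown c (E p) z)) (E(p := z)) p C2"
    unfolding C2_def using macro_write_step[OF b ok(2) _ s1(2)] s1(3) b ok by auto
  define C3 where "C3 = sim_exec C2"
  have s3: "sim_reach C2 1 C3" "sim_cfg (Macro b (ZUp c (E p) z)) (E(p := z)) (p - 1) C3"
    unfolding C3_def using macro_plain_step[OF b ok(3) _ _ s2(2)] b ok zero_sim_gam
    by (auto simp: applyop_def)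
  define C4 where "C4 = sim_exec C3"
  have s4: "sim_reach C3 1 C4" "sim_cfg (Macro b (ZReadBack c (E p) z)) (E(p := z)) (p - 1 + 1) C4"
    unfolding C4_def using macro_plain_step[OF b ok(4) _ _ s3(2)] b ok zero_sim_gam
    by (auto simp: applyop_def)
  define C5 where "C5 = sim_exec C4"
  have s5: "sim_reach C4 1 C5" "sim_cfg (Macro b (ZCompare c (E p) z)) (E(p := z)) (p - 1 + 1) C5"
    "mem C5 0 = (E(p := z)) (p - 1 + 1)"
    unfolding C5_def using macro_read_step[OF b ok(5) _ s4(2)] b ok by auto
  have "sim_reach C 5 C5"
    using sim_reach_trans[OF sim_reach_trans[OF sim_reach_trans[OF sim_reach_trans[OF
          s1(1) s2(1)] s3(1)] s4(1)] s5(1)]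
    by (simp add: eval_nat_numeral)
  then show ?thesis using s5 by blast
qed

lemma zero_test:
  assumes b: "b \<in> base_space" and c: "c < probe_limit" and E: "\<And>i. E i \<in> gam m"
    and C: "sim_cfg (Macro b (Probe c)) E p C"
  shows "\<exists>n C'. sim_reach C n C' \<and> n \<le> 12 \<and>
    (if p = 0 then sim_cfg (Macro b (Climb c c 0)) E 0 C' else sim_cfg (Macro b (Probe (Suc c))) E (p - 1) C')"
proof -
  define u where "u = E (Suc p)"
  define z where "z = fresh_symbol u (E p)"
  define f :: nat where "f = (if p = 0 then 0 else 1)"
  obtain C4 where s4: "sim_reach C 4 C4" "sim_cfg (Macro b (ZMark c u)) E p C4" "mem C4 0 = E p"
    using zero_test_read[OF b c E C] unfolding u_def by blast
  obtain C9 where s9: "sim_reach C4 5 C9" "sim_cfg (Macro b (ZCompare c (E p) z)) (E(p := z)) (p - 1 + 1) C9"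
      "mem C9 0 = (E(p := z)) (p - 1 + 1)"
    using zero_test_mark[OF b c E s4(2,3)] E[of "Suc p"] unfolding u_def z_def by blast
  have z: "z \<noteq> u" "z \<noteq> E p" "z \<in> sim_gam" "z \<le> arg_bound"
    using fresh_symbol[of u "E p"] arg_bound_ge by (auto simp: z_def sim_gam_def)
  have ok: "micro_ok (ZCompare c (E p) z)" "micro_ok (ZRestore c (E p) f)" "micro_ok (ProbeDown c)"
    "micro_ok (Climb c c 0)" "micro_ok (Probe (Suc c))"
    using c E[of p] z arg_bound_ge gam_sim_gam sim_gam_le_arg_bound by (auto simp: micro_ok_def f_def)
  have compare: "micro_step b (ZCompare c (E p) z) (mem C9 0)
      = (Macro b (ZRestore c (E p) f), E p, if p = 0 then ADec else AKeep)"
    using s9(3) z(1) by (auto simp: u_def f_def)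
  have restored_adr: "applyop (if p = 0 then ADec else AKeep) (p - 1 + 1) = p"
    by (simp add: applyop_def)
  have s10: "sim_reach C9 1 (sim_exec C9)"
      "sim_cfg (Macro b (ZRestore c (E p) f)) (E(p := z)) p (sim_exec C9)" "mem (sim_exec C9) 0 = E p"
    using macro_plain_step[OF b ok(1) _ _ s9(2) compare, unfolded restored_adr] b ok E[of p] gam_sim_gam
    by auto
  define C11 where "C11 = sim_exec (sim_exec C9)"
  have s11: "sim_reach (sim_exec C9) 1 C11"
      "sim_cfg (Macro b (if f = 1 then ProbeDown c else Climb c c 0)) E p C11"
    unfolding C11_def using macro_write_step[OF b ok(2) _ s10(2)] s10(3) b ok
    by (auto simp: f_def fun_upd_idem)
  have r11: "sim_reach C 11 C11"
    using sim_reach_trans[OF sim_reach_trans[OF sim_reach_trans[OF s4(1) s9(1)] s10(1)] s11(1)] by simp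
  show ?thesis
  proof (cases "p = 0")
    case True
    then show ?thesis using r11 s11(2) by (intro exI[of _ 11] exI[of _ C11]) (simp add: f_def)
  next
    case False
    then have s12: "sim_reach C11 1 (sim_exec C11)"
        "sim_cfg (Macro b (Probe (Suc c))) E (p - 1) (sim_exec C11)"
      using macro_plain_step[OF b ok(3) _ _ _ micro_step.simps(14)] s11(2) b ok zero_sim_gam
      by (auto simp: f_def applyop_def)
    have "sim_reach C 12 (sim_exec C11)" using sim_reach_trans[OF r11 s12(1)] by simp
    then show ?thesis using s12(2) False by (intro exI[of _ 12] exI[of _ "sim_exec C11"]) simp
  qed
qed

lemma probe_loop:
  assumes b: "b \<in> base_space" and E: "\<And>i. E i \<in> gam m"
  shows "probe_limit - c = d \<Longrightarrow> c \<le> probe_limit \<Longrightarrow> c \<le> a \<Longrightarrow> sim_cfg (Macro b (Probe c)) E (a - c) C \<Longrightarrow>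
    \<exists>n C' k f. sim_reach C n C' \<and> n \<le> 12 * d + 1 \<and> sim_cfg (Macro b (Climb k k f)) E (a - k) C'
      \<and> k \<le> a \<and> k \<le> probe_limit \<and> (f = 1 \<and> k = probe_limit \<or> f = 0 \<and> k = a)"
proof (induction d arbitrary: c C)
  case 0
  then have c: "c = probe_limit" by simp
  have ok: "micro_ok (Probe c)" "micro_ok (Climb probe_limit probe_limit 1)"
    using c arg_bound_ge by (auto simp: micro_ok_def)
  have "micro_step b (Probe c) (mem C 0) = (Macro b (Climb probe_limit probe_limit 1), 0, AKeep)"
    using c by simp
  then have "sim_reach C 1 (sim_exec C)" "sim_cfg (Macro b (Climb probe_limit probe_limit 1)) E (a - c) (sim_exec C)"
    using macro_plain_step[OF b ok(1) _ _ "0.prems"(4)] b ok(2) zero_sim_gam by (auto simp: applyop_def)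
  then show ?case using "0.prems" c
    by (intro exI[of _ 1] exI[of _ "sim_exec C"] exI[of _ probe_limit] exI[of _ 1]) auto
next
  case (Suc d)
  have c: "c < probe_limit" using Suc.prems by simp
  obtain n C' where C': "sim_reach C n C'" "n \<le> 12"
    "if a - c = 0 then sim_cfg (Macro b (Climb c c 0)) E 0 C' else sim_cfg (Macro b (Probe (Suc c))) E (a - c - 1) C'"
    using zero_test[OF b c E Suc.prems(4)] by blast
  show ?case
  proof (cases "a - c = 0")
    case True
    then show ?thesis using C' c Suc.prems(3) by (intro exI[of _ n] exI[of _ C'] exI[of _ c] exI[of _ 0]) auto
  next
    case False
    then have "probe_limit - Suc c = d" "Suc c \<le> probe_limit" "Suc c \<le> a"
      "sim_cfg (Macro b (Probe (Suc c))) E (a - Suc c) C'"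
      using Suc.prems C'(3) by auto
    then obtain n' C'' k f where "sim_reach C' n' C''" "n' \<le> 12 * d + 1"
        "sim_cfg (Macro b (Climb k k f)) E (a - k) C''" "k \<le> a" "k \<le> probe_limit"
        "f = 1 \<and> k = probe_limit \<or> f = 0 \<and> k = a"
      using Suc.IH by blast
    then show ?thesis using sim_reach_trans[OF C'(1)] C'(2)
      by (intro exI[of _ "n + n'"] exI[of _ C''] exI[of _ k] exI[of _ f]) auto
  qed
qed

definition shadow_rel :: "nat \<Rightarrow> nat \<Rightarrow> nat \<Rightarrow> bool" where
  "shadow_rel j a y \<longleftrightarrow> a = y \<or> (a mod B = y mod B \<and> probe_limit \<le> a + j \<and> probe_limit \<le> y + j)"

lemma B_dvd_probe_limit: "B dvd probe_limit"
  by (simp add: probe_limit_def)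

lemma address_probe:
  assumes b: "(q, vm, h, y) \<in> base_space" and E: "\<And>i. E i \<in> gam m" and a: "a mod B = y mod B"
    and C: "sim_cfg (Macro (q, vm, h, y) (Probe 0)) E a C"
  shows "\<exists>n C' y'. sim_reach C n C' \<and> n \<le> 13 * probe_limit + 2
    \<and> sim_cfg (sim_state (fst (ionext m q)) vm (move M (snd (ionext m q)) h) y') E a C'
    \<and> shadow_rel 0 a y' \<and> y' \<le> probe_limit + B"
proof -
  let ?b = "(q, vm, h, y)"
  obtain n C1 k f where probe: "sim_reach C n C1" "n \<le> 12 * probe_limit + 1"
      "sim_cfg (Macro ?b (Climb k k f)) E (a - k) C1" "k \<le> a" "k \<le> probe_limit"
      "f = 1 \<and> k = probe_limit \<or> f = 0 \<and> k = a"
    using probe_loop[where E = E and c = 0 and d = probe_limit and a = a and C = C, OF b E] C by auto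
  have ok: "j \<le> k \<Longrightarrow> micro_ok (Climb j k f)" for j
    using probe(5,6) arg_bound_ge by (auto simp: micro_ok_def)
  obtain C2 where climb: "sim_reach C1 k C2" "sim_cfg (Macro ?b (Climb 0 k f)) E a C2"
    using macro_countdown[OF b, of k "\<lambda>j. Climb j k f" AInc E "a - k" C1] probe(3,4) ok by auto
  define y' where "y' = (if f = 1 then probe_limit + y mod B else k)"
  have y': "y' \<le> probe_limit + B" "y' \<le> shadow_bound"
    using probe(5,6) mod_less_divisor[OF B_pos, of y] by (auto simp: y'_def shadow_bound_def)
  have "shadow_rel 0 a y'"
    using probe(4,6) a B_dvd_probe_limit by (auto simp: shadow_rel_def y'_def mod_add_left_eq[symmetric])
  moreover have final: "sim_state (fst (ionext m q)) vm (move M (snd (ionext m q)) h) y' \<in> sim_space"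
    using b wf_facts(12) y' by (intro sim_state_in_space) (auto simp: base_space_def move_less M_pos)
  then have "sim_reach C2 1 (sim_exec C2)"
      "sim_cfg (sim_state (fst (ionext m q)) vm (move M (snd (ionext m q)) h) y') E a (sim_exec C2)"
    using macro_plain_step[OF b ok[of 0] _ _ climb(2)] zero_sim_gam
    by (auto simp: probe_result_def y'_def applyop_def)
  moreover have "sim_reach C (n + k + 1) (sim_exec C2)"
    using sim_reach_trans[OF sim_reach_trans[OF probe(1) climb(1)] calculation(2)] .
  ultimately show ?thesis using probe(2,5) y'(1)
    by (intro exI[of _ "n + k + 1"] exI[of _ "sim_exec C2"] exI[of _ y']) auto
qed

lemma step_io:
  assumes "st c \<in> rdst m \<union> wrst m"
  shows "st (step M B m c) = fst (ionext m (st c))" "hd (step M B m c) = move M (snd (ionext m (st c))) (hd c)"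
    "adr (step M B m c) = adr c"
    "st c \<in> rdst m \<Longrightarrow> mem (step M B m c) = mem_load (mem c) (hd c) (adr c div B * B) (ext c) B
      \<and> ext (step M B m c) = ext c"
    "st c \<notin> rdst m \<Longrightarrow> mem (step M B m c) = mem c
      \<and> ext (step M B m c) = ext_store (mem c) (hd c) (adr c div B * B) (ext c) B"
proof -
  have "st c \<noteq> qacc m" using assms wf_facts(8,9) by auto
  note rd_eq = step_read[OF this] and wr_eq = step_write[OF this]
  show "st (step M B m c) = fst (ionext m (st c))" "hd (step M B m c) = move M (snd (ionext m (st c))) (hd c)"
    "adr (step M B m c) = adr c"
    using assms rd_eq wr_eq by (cases "st c \<in> rdst m"; simp)+
  show "st c \<in> rdst m \<Longrightarrow> mem (step M B m c) = mem_load (mem c) (hd c) (adr c div B * B) (ext c) B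
      \<and> ext (step M B m c) = ext c"
    using rd_eq by (auto simp: mem_load_def fun_eq_iff)
  show "st c \<notin> rdst m \<Longrightarrow> mem (step M B m c) = mem c
      \<and> ext (step M B m c) = ext_store (mem c) (hd c) (adr c div B * B) (ext c) B"
    using assms wr_eq by (auto simp: ext_store_def fun_eq_iff)
qed

lemma transfer_block_cells:
  assumes c: "valid c" and io: "st c \<in> rdst m \<union> wrst m" and y: "y \<le> shadow_bound"
    and C: "sim_cfg (Macro (st c, mem c, hd c, y) (AlignDown 0)) (ext c) (adr c div B * B) C"
  shows "\<exists>n C'. sim_reach C n C' \<and> n \<le> 3 * B + 1
    \<and> sim_cfg (Macro (st c, mem (step M B m c), hd c, y) (StepBack (B - y mod B)))
        (ext (step M B m c)) (adr c div B * B + B) C'"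
proof -
  let ?b = "(st c, mem c, hd c, y)" and ?A = "adr c div B * B"
  have b: "?b \<in> base_space" using c y by (simp add: base_space_def valid_def)
  have E: "\<And>i. ext c i \<in> gam m" using c by (simp add: valid_def)
  let ?first = "if st c \<in> rdst m then ReadCell 0 else PutCell 0"
  have "micro_ok (AlignDown 0)" "micro_ok ?first" using arg_bound_ge by (auto simp: micro_ok_def)
  then have s1: "sim_reach C 1 (sim_exec C)" "sim_cfg (Macro ?b ?first) (ext c) ?A (sim_exec C)"
    using macro_plain_step[OF b _ _ _ C] b zero_sim_gam by (auto simp: applyop_def)
  obtain n C' where loop: "sim_reach (sim_exec C) n C'" "n \<le> 3 * B"
    "sim_cfg (Macro (st c, mem (step M B m c), hd c, y) (StepBack (B - y mod B))) (ext (step M B m c)) (?A + B) C'"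
  proof (cases "st c \<in> rdst m")
    case True
    then show ?thesis
      using that read_block_loop[where E = "ext c" and j = 0 and d = B and C = "sim_exec C" and A = ?A, OF b E] s1(2) step_io(4)[OF io] B_pos by auto
  next
    case False
    then show ?thesis
      using that write_block_loop[where E = "ext c" and j = 0 and d = B and C = "sim_exec C" and A = ?A, OF b] s1(2) step_io(5)[OF io] B_pos by auto
  qed
  then show ?thesis using sim_reach_trans[OF s1(1) loop(1)] by (intro exI[of _ "1 + n"] exI[of _ C']) auto
qed

lemma block_transfer:
  assumes c: "valid c" and io: "st c \<in> rdst m \<union> wrst m" and y: "y \<le> shadow_bound"
    and a: "adr c mod B = y mod B" and C: "sim_cfg (Sim (st c, mem c, hd c, y)) (ext c) (adr c) C"
  shows "\<exists>n C'. sim_reach C n C' \<and> n \<le> 4 * B + 3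
    \<and> sim_cfg (Macro (st c, mem (step M B m c), hd c, y) (Probe 0)) (ext (step M B m c)) (adr c) C'"
proof -
  let ?b = "(st c, mem c, hd c, y)" and ?b' = "(st c, mem (step M B m c), hd c, y)"
  define r where "r = y mod B"
  have r: "r < B" "r \<le> adr c" "adr c - r = adr c div B * B" "adr c div B * B + r = adr c"
    using a B_pos by (auto simp: r_def minus_mod_eq_div_mult[symmetric] simp flip: a)
  have b: "?b \<in> base_space" "?b' \<in> base_space"
    using c valid_step[OF c] y by (simp_all add: base_space_def valid_def)
  have "Sim ?b \<noteq> Accept" "\<not> sim_reads (Sim ?b)" "\<not> sim_writes (Sim ?b)" "micro_ok (AlignDown r)"
    using r arg_bound_ge by (auto simp: micro_ok_def)
  then have s1: "sim_reach C 1 (sim_exec C)" "sim_cfg (Macro ?b (AlignDown r)) (ext c) (adr c) (sim_exec C)"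
    using sim_plain_step[OF _ _ _ _ C] b io zero_sim_gam by (auto simp: applyop_def r_def)
  have "k \<le> r \<Longrightarrow> micro_ok (AlignDown k)" for k using r arg_bound_ge by (auto simp: micro_ok_def)
  then obtain C2 where s2: "sim_reach (sim_exec C) r C2"
      "sim_cfg (Macro ?b (AlignDown 0)) (ext c) (adr c div B * B) C2"
    using macro_countdown[OF b(1), of r AlignDown ADec, OF _ _ _ s1(2)] r by auto
  obtain n3 C3 where s3: "sim_reach C2 n3 C3" "n3 \<le> 3 * B + 1"
      "sim_cfg (Macro ?b' (StepBack (B - r))) (ext (step M B m c)) (adr c div B * B + B) C3"
    using transfer_block_cells[OF c io y s2(2)] unfolding r_def by blast
  have "k \<le> B - r \<Longrightarrow> micro_ok (StepBack k)" for k using arg_bound_ge by (auto simp: micro_ok_def)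
  then obtain C4 where s4: "sim_reach C3 (B - r) C4"
      "sim_cfg (Macro ?b' (StepBack 0)) (ext (step M B m c)) (adr c) C4"
    using macro_countdown[OF b(2), of "B - r" StepBack ADec, OF _ _ _ s3(3)] r by auto
  have "micro_ok (StepBack 0)" "micro_ok (Probe 0)" by (simp_all add: micro_ok_def)
  then have s5: "sim_reach C4 1 (sim_exec C4)"
      "sim_cfg (Macro ?b' (Probe 0)) (ext (step M B m c)) (adr c) (sim_exec C4)"
    using macro_plain_step[OF b(2) _ _ _ s4(2)] b zero_sim_gam by (auto simp: applyop_def)
  have "sim_reach C (1 + r + n3 + (B - r) + 1) (sim_exec C4)"
    by (rule sim_reach_trans[OF sim_reach_trans[OF sim_reach_trans[OF sim_reach_trans[OF
          s1(1) s2(1)] s3(1)] s4(1)] s5(1)])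
  then show ?thesis using s3(2) s5(2) r(1) by (intro exI[of _ "1 + r + n3 + (B - r) + 1"]) auto
qed

definition io_overhead :: nat where "io_overhead = 4 * B + 13 * probe_limit + 5"

lemma io_macro:
  assumes c: "valid c" and io: "st c \<in> rdst m \<union> wrst m" and y: "y \<le> shadow_bound"
    and a: "adr c mod B = y mod B" and C: "sim_cfg (Sim (st c, mem c, hd c, y)) (ext c) (adr c) C"
  shows "\<exists>n C' y'. sim_reach C n C' \<and> n \<le> io_overhead
    \<and> sim_cfg (sim_state (st (step M B m c)) (mem (step M B m c)) (hd (step M B m c)) y')
        (ext (step M B m c)) (adr (step M B m c)) C'
    \<and> shadow_rel 0 (adr c) y' \<and> y' \<le> probe_limit + B"
proof -
  obtain n1 C1 where s1: "sim_reach C n1 C1" "n1 \<le> 4 * B + 3"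
      "sim_cfg (Macro (st c, mem (step M B m c), hd c, y) (Probe 0)) (ext (step M B m c)) (adr c) C1"
    using block_transfer[OF c io y a C] by blast
  have "(st c, mem (step M B m c), hd c, y) \<in> base_space" "\<And>i. ext (step M B m c) i \<in> gam m"
    using c valid_step[OF c] y by (simp_all add: base_space_def valid_def)
  then obtain n2 C2 y' where s2: "sim_reach C1 n2 C2" "n2 \<le> 13 * probe_limit + 2"
      "sim_cfg (sim_state (fst (ionext m (st c))) (mem (step M B m c)) (move M (snd (ionext m (st c))) (hd c)) y')
        (ext (step M B m c)) (adr c) C2" "shadow_rel 0 (adr c) y'" "y' \<le> probe_limit + B"
    using address_probe[OF _ _ a s1(3)] by blast
  show ?thesis
    using sim_reach_trans[OF s1(1) s2(1)] s1(2) s2(2-5) step_io(1-3)[OF io]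
    by (intro exI[of _ "n1 + n2"] exI[of _ C2] exI[of _ y']) (auto simp: io_overhead_def)
qed

lemma shadow_rel_step:
  assumes "shadow_rel j a y" "j < probe_limit"
  shows "shadow_rel (Suc j) (applyop op a) (applyop op y)"
proof (cases "a = y")
  case False
  then have h: "a mod B = y mod B" "probe_limit \<le> a + j" "probe_limit \<le> y + j"
    using assms(1) by (auto simp: shadow_rel_def)
  have pos: "0 < a" "0 < y" using h assms(2) by auto
  then have "(a - 1) mod B = (y - 1) mod B" using mod_diff1_cong h(1) by blast
  moreover have "(a + 1) mod B = (y + 1) mod B" using h(1) by (metis mod_add_left_eq)
  ultimately show ?thesis using h pos by (cases op) (auto simp: shadow_rel_def applyop_def)
qed (simp add: shadow_rel_def)

text \<open>The invariant of the simulation after \<open>t\<close> steps of the block machine: \<open>j\<close> counts the plain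
  steps since the last IO, during which the shadow address may have drifted away from the real one.\<close>

definition sim_rel :: "nat list \<Rightarrow> nat \<Rightarrow> cfg \<Rightarrow> bool" where
  "sim_rel x t C \<longleftrightarrow> (let c = run M B m x t in \<exists>y j.
     sim_cfg (sim_state (st c) (mem c) (hd c) y) (ext c) (adr c) C \<and> y \<le> probe_limit + B + j \<and> j \<le> t
     \<and> (\<forall>i. t - j \<le> i \<longrightarrow> i < t \<longrightarrow> \<not> is_io m (run M B m x i)) \<and> shadow_rel j (adr c) y)"

lemma sim_rel_init: "sim_rel x 0 (init sim_machine x)"
  unfolding sim_rel_def run_0 Let_def
  by (intro exI[of _ 0] exI[of _ 0]) (simp add: init_def sim_machine_def blank_def shadow_rel_def sim_cfg_def)

lemma card_local_space_less: "card local_space < probe_limit"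
proof -
  have "1 * (card local_space + 1) \<le> B * (card local_space + 1)"
    using B_pos by (intro mult_right_mono) auto
  then show ?thesis by (simp add: probe_limit_def)
qed

lemma sim_rel_io_step:
  assumes x: "x \<in> lists \<Sigma>" and halts: "halts_at M B m x T" and "t < T"
    and rel: "sim_rel x t C" and io: "is_io m (run M B m x t)"
  shows "\<exists>n C'. sim_reach C n C' \<and> n \<le> io_overhead \<and> sim_rel x (Suc t) C'"
proof -
  define c where "c = run M B m x t"
  obtain y j where R: "sim_cfg (sim_state (st c) (mem c) (hd c) y) (ext c) (adr c) C"
      "y \<le> probe_limit + B + j" "j \<le> t" "\<And>i. t - j \<le> i \<Longrightarrow> i < t \<Longrightarrow> \<not> is_io m (run M B m x i)"
      "shadow_rel j (adr c) y"
    using rel unfolding sim_rel_def c_def Let_def by blast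
  have "st c \<noteq> qacc m" using halts \<open>t < T\<close> by (simp add: halts_at_def c_def)
  then have C: "sim_cfg (Sim (st c, mem c, hd c, y)) (ext c) (adr c) C"
    using R(1) by (simp add: sim_state_def)
  have "j \<le> card local_space"
    using plain_phase_length_le[OF x halts, of "t - j" j] R(3,4) \<open>t < T\<close> by auto
  then have y: "y \<le> shadow_bound"
    using R(2) card_local_space_less by (simp add: shadow_bound_def)
  have "adr c mod B = y mod B" using R(5) by (auto simp: shadow_rel_def)
  moreover have "valid c" using valid_run[OF x] by (simp add: c_def)
  ultimately obtain n C' y' where "sim_reach C n C'" "n \<le> io_overhead"
      "sim_cfg (sim_state (st (step M B m c)) (mem (step M B m c)) (hd (step M B m c)) y')
        (ext (step M B m c)) (adr (step M B m c)) C'" "shadow_rel 0 (adr c) y'" "y' \<le> probe_limit + B"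
    using io_macro[OF _ _ y _ C] io unfolding c_def is_io_def by blast
  moreover have "adr (step M B m c) = adr c" using step_io(3) io by (simp add: c_def is_io_def)
  ultimately show ?thesis
    unfolding sim_rel_def Let_def run_Suc c_def[symmetric]
    by (intro exI[of _ n] exI[of _ C'] conjI exI[of _ y'] exI[of _ 0]) auto
qed

lemma sim_rel_plain_step:
  assumes x: "x \<in> lists \<Sigma>" and halts: "halts_at M B m x T" and "t < T"
    and rel: "sim_rel x t C" and plain: "\<not> is_io m (run M B m x t)"
  shows "sim_reach C 1 (sim_exec C) \<and> sim_rel x (Suc t) (sim_exec C) \<and> \<not> is_io sim_machine C"
proof -
  define c where "c = run M B m x t"
  obtain y j where R: "sim_cfg (sim_state (st c) (mem c) (hd c) y) (ext c) (adr c) C"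
      "y \<le> probe_limit + B + j" "j \<le> t" "\<And>i. t - j \<le> i \<Longrightarrow> i < t \<Longrightarrow> \<not> is_io m (run M B m x i)"
      "shadow_rel j (adr c) y"
    using rel unfolding sim_rel_def c_def Let_def by blast
  have np: "st c \<noteq> qacc m" "st c \<notin> rdst m" "st c \<notin> wrst m"
    using halts \<open>t < T\<close> plain by (auto simp: halts_at_def is_io_def c_def)
  have C: "sim_cfg (Sim (st c, mem c, hd c, y)) (ext c) (adr c) C"
    using R(1) np by (simp add: sim_state_def)
  have "Suc j \<le> card local_space"
    using plain_phase_length_le[OF x halts, of "t - j" "Suc j"] R(3,4) plain \<open>t < T\<close>
    by (auto simp: c_def less_Suc_eq)
  then have j: "j < probe_limit" "probe_limit + B + Suc j \<le> shadow_bound"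
    using card_local_space_less by (auto simp: shadow_bound_def)
  define op where "op = aop m (st c) (mem c (hd c))"
  define c' where "c' = step M B m c"
  have c': "adr c' = applyop op (adr c)" "ext c' = ext c"
    using step_plain[OF np] by (simp_all add: c'_def op_def)
  have valid: "valid c" "valid c'"
    using valid_run[OF x] valid_step by (simp_all add: c'_def c_def)
  have y': "applyop op y \<le> probe_limit + B + Suc j" using R(2) by (cases op) (auto simp: applyop_def)
  have step_eq: "sim_step (Sim (st c, mem c, hd c, y)) (mem C 0)
      = (sim_state (st c') (mem c') (hd c') (applyop op y), 0, op)"
    using np by (simp add: step_plain c'_def op_def)
  have "Sim (st c, mem c, hd c, y) \<in> sim_space"
    using valid(1) R(2) j(2) by (simp add: base_space_def valid_def)
  moreover have "sim_state (st c') (mem c') (hd c') (applyop op y) \<in> sim_space"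
    using valid(2) y' j(2) by (intro sim_state_in_space) (auto simp: valid_def)
  ultimately have s: "sim_reach C 1 (sim_exec C)"
      "sim_cfg (sim_state (st c') (mem c') (hd c') (applyop op y)) (ext c') (adr c') (sim_exec C)"
    using sim_plain_step[OF _ _ _ _ C step_eq _ zero_sim_gam] c' by auto
  have "sim_rel x (Suc t) (sim_exec C)"
    unfolding sim_rel_def Let_def run_Suc c_def[symmetric] c'_def[symmetric]
    using s(2) y' R(3,4) plain shadow_rel_step[OF R(5) j(1), of op] c'(1)
    by (intro exI[of _ "applyop op y"] exI[of _ "Suc j"]) (auto simp: c_def less_Suc_eq)
  moreover have "\<not> is_io sim_machine C"
    using C valid(1) R(2) j(2) enc_eq_iff
    by (auto simp: is_io_def sim_cfg_def valid_def base_space_def)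
  ultimately show ?thesis using s(1) by blast
qed

lemma run_sim_reach:
  assumes "sim_reach (run M 1 sim_machine x t) n C" "\<forall>i<t. st (run M 1 sim_machine x i) \<noteq> enc Accept"
  shows "run M 1 sim_machine x (t + n) = C" "\<forall>i<t + n. st (run M 1 sim_machine x i) \<noteq> enc Accept"
proof -
  show "run M 1 sim_machine x (t + n) = C" using assms(1) by (simp add: run_add sim_reach_def)
  have "st (run M 1 sim_machine x i) \<noteq> enc Accept" if "t \<le> i" "i < t + n" for i
    using assms(1) that run_add[of M 1 sim_machine x t "i - t"] by (simp add: sim_reach_def)
  then show "\<forall>i<t + n. st (run M 1 sim_machine x i) \<noteq> enc Accept"
    using assms(2) not_less by blast
qed

lemma simulation_prefix:
  assumes x: "x \<in> lists \<Sigma>" and halts: "halts_at M B m x T"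
  shows "t \<le> T \<Longrightarrow> \<exists>t'. sim_rel x t (run M 1 sim_machine x t')
    \<and> (\<forall>i<t'. st (run M 1 sim_machine x i) \<noteq> enc Accept)
    \<and> time_of M 1 sim_machine x t' \<le> time_of M B m x t + io_overhead * io_of M B m x t
    \<and> io_of M 1 sim_machine x t' \<le> io_overhead * io_of M B m x t"
proof (induction t)
  case 0
  show ?case using sim_rel_init
    by (intro exI[of _ 0]) (simp add: run_0 time_of_def io_of_def)
next
  case (Suc t)
  then obtain t' where IH: "sim_rel x t (run M 1 sim_machine x t')"
      "\<forall>i<t'. st (run M 1 sim_machine x i) \<noteq> enc Accept"
      "time_of M 1 sim_machine x t' \<le> time_of M B m x t + io_overhead * io_of M B m x t"
      "io_of M 1 sim_machine x t' \<le> io_overhead * io_of M B m x t"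
    by auto
  have "t < T" using Suc.prems by simp
  show ?case
  proof (cases "is_io m (run M B m x t)")
    case True
    obtain n C' where "sim_reach (run M 1 sim_machine x t') n C'" "n \<le> io_overhead" "sim_rel x (Suc t) C'"
      using sim_rel_io_step[OF x halts \<open>t < T\<close> IH(1) True] by blast
    then show ?thesis
      using run_sim_reach[OF _ IH(2)] IH(3,4) True
        time_of_add_le[of M 1 sim_machine x t' n] io_of_add_le[of M 1 sim_machine x t' n]
      by (intro exI[of _ "t' + n"]) (auto simp: time_of_Suc io_of_Suc)
  next
    case False
    then have "sim_reach (run M 1 sim_machine x t') 1 (run M 1 sim_machine x (Suc t'))"
      "sim_rel x (Suc t) (run M 1 sim_machine x (Suc t'))" "\<not> is_io sim_machine (run M 1 sim_machine x t')"
      using sim_rel_plain_step[OF x halts \<open>t < T\<close> IH(1)] by (simp_all add: run_Suc)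
    then show ?thesis
      using run_sim_reach[OF _ IH(2)] IH(3,4) False
      by (intro exI[of _ "Suc t'"]) (auto simp: time_of_Suc io_of_Suc)
  qed
qed

lemma simulation:
  assumes x: "x \<in> lists \<Sigma>" and halts: "halts_at M B m x T"
  shows "\<exists>t'. halts_at M 1 sim_machine x t' \<and> ext (run M 1 sim_machine x t') = ext (run M B m x T)
    \<and> time_of M 1 sim_machine x t' \<le> time_of M B m x T + io_overhead * io_of M B m x T
    \<and> io_of M 1 sim_machine x t' \<le> io_overhead * io_of M B m x T"
proof -
  obtain t' where t': "sim_rel x T (run M 1 sim_machine x t')"
      "\<forall>i<t'. st (run M 1 sim_machine x i) \<noteq> enc Accept"
      "time_of M 1 sim_machine x t' \<le> time_of M B m x T + io_overhead * io_of M B m x T"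
      "io_of M 1 sim_machine x t' \<le> io_overhead * io_of M B m x T"
    using simulation_prefix[OF x halts] by blast
  have "st (run M B m x T) = qacc m" using halts by (simp add: halts_at_def)
  then have "st (run M 1 sim_machine x t') = qacc sim_machine"
    "ext (run M 1 sim_machine x t') = ext (run M B m x T)"
    using t'(1) by (auto simp: sim_rel_def sim_state_def sim_cfg_def Let_def)
  then show ?thesis using t' by (intro exI[of _ t']) (auto simp: halts_at_def)
qed

lemma sim_machine_computes:
  assumes "computes_in \<Sigma> M B m f T IO"
  shows "computes_in \<Sigma> M 1 sim_machine f (\<lambda>n. T n + real B * IO n) (\<lambda>n. real B * IO n)"
proof -
  obtain c N where runs: "\<And>x. x \<in> lists \<Sigma> \<Longrightarrow> \<exists>t. halts_at M B m x t \<and> output_is (run M B m x t) (f x) \<and>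
        (length x \<ge> N \<longrightarrow> real (time_of M B m x t) \<le> c * T (length x)
                        \<and> real (io_of M B m x t) \<le> c * IO (length x))"
    using assms unfolding computes_in_def by blast
  have sim_runs: "\<exists>t'. halts_at M 1 sim_machine x t' \<and> output_is (run M 1 sim_machine x t') (f x) \<and>
      (length x \<ge> N \<longrightarrow>
        real (time_of M 1 sim_machine x t') \<le> (c * io_overhead) * (T (length x) + B * IO (length x))
        \<and> real (io_of M 1 sim_machine x t') \<le> (c * io_overhead) * (B * IO (length x)))"
    if x: "x \<in> lists \<Sigma>" for x
  proof -
    obtain t where t: "halts_at M B m x t" "output_is (run M B m x t) (f x)"
      "length x \<ge> N \<longrightarrow> real (time_of M B m x t) \<le> c * T (length x) \<and> real (io_of M B m x t) \<le> c * IO (length x)"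
      using runs[OF x] by blast
    obtain t' where t': "halts_at M 1 sim_machine x t'" "ext (run M 1 sim_machine x t') = ext (run M B m x t)"
      "time_of M 1 sim_machine x t' \<le> time_of M B m x t + io_overhead * io_of M B m x t"
      "io_of M 1 sim_machine x t' \<le> io_overhead * io_of M B m x t"
      using simulation[OF x t(1)] by blast
    have "1 \<le> io_overhead" "1 \<le> B" using B_pos by (auto simp: io_overhead_def)
    note bounds = overhead_bounds[where c = c and T = "T (length x)" and I = "IO (length x)",
        OF _ _ t'(3,4) this]
    show ?thesis using t' t(2,3) bounds by (intro exI[of _ t']) (simp add: output_is_def)
  qed
  show ?thesis
    unfolding computes_in_def using M_pos well_formed_sim_machine sim_runs
    by (intro conjI zero_less_one one_dvd) blast+
qed

end

theorem theorem3:
  fixes \<Sigma> :: "nat set" and M B :: nat and m :: tlm and f :: "nat list \<Rightarrow> nat list"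
    and T IO :: "nat \<Rightarrow> real"
  assumes "tlm_bt_computes \<Sigma> M B m f T IO"
  shows "\<exists>m'. tlm_computes \<Sigma> M m' f (\<lambda>n. T n + real B * IO n) (\<lambda>n. real B * IO n)"
proof -
  have bt: "computes_in \<Sigma> M B m f T IO" using assms by (simp add: tlm_bt_computes_def)
  then interpret bt_machine \<Sigma> M B m by unfold_locales (simp_all add: computes_in_def)
  show ?thesis using sim_machine_computes[OF bt] unfolding tlm_computes_def by blast
qed

end
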